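(* Let $(L,d)$ be a metric locale without isolated points and let $a\in L$ with $a^*=0$. Then there exists $g\in L$ with $g^*\vee g^{**}\le a$.
   Context: A frame (locale) $L$ is a complete lattice in which finite meets distribute over arbitrary joins; $a^*$ denotes the pseudocomplement of $a$. A diameter on $L$ is a map $d\colon L\to[0,+\infty]$ with (D1) $d(0)=0$; (D2) $a\le b\Rightarrow d(a)\le d(b)$; (D3) $a\wedge b\neq 0\Rightarrow d(a\vee b)\le d(a)+d(b)$; (D4) for every $\varepsilon>0$, $\bigvee\{a\in L\mid d(a)<\varepsilon\}=1$. Write $b\lhd_\varepsilon a$ if for every $c\in L$ with $d(c)<\varepsilon$, $c\wedge b\ne0$ implies $c\le a$. The diameter is admissible if $a=\bigvee\{b\in L\mid b\lhd_\varepsilon a \text{ for some }\varepsilon>0\}$ for all $a\in L$; a metric locale is a pair $(L,d)$ with $d$ an admissible diameter. A sublocale of $L$ is a subset closed under arbitrary meets such that $x\to s$ lies in it whenever $s$ does ($\to$ the Heyting implication); the open sublocale of $x$ is $\mathfrak{o}(x)=\{x\to y\mid y\in L\}$. A point of $L$ is $p\ne1$ such that $x\wedge y\le p$ implies $x\le p$ or $y\le p$; it is isolated if the sublocale $\{1,p\}$ equals $\mathfrak{o}(x)$ for some $x\in L$. *)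

theory Defs
  imports Main "HOL-Library.Extended_Nonnegative_Real"
begin

definition frame :: "'a::complete_lattice itself \<Rightarrow> bool" where
  "frame _ \<longleftrightarrow> (\<forall>(a::'a) S. inf a (Sup S) = Sup ((\<lambda>s. inf a s) ` S))"

definition pcompl :: "'a::complete_lattice \<Rightarrow> 'a" where
  "pcompl a = Sup {x. inf x a = bot}"

definition himp :: "'a::complete_lattice \<Rightarrow> 'a \<Rightarrow> 'a" where
  "himp x y = Sup {z. inf z x \<le> y}"

definition diameter :: "('a::complete_lattice \<Rightarrow> ennreal) \<Rightarrow> bool" where
  "diameter d \<longleftrightarrow>
     d bot = 0 \<and>
     (\<forall>a b. a \<le> b \<longrightarrow> d a \<le> d b) \<and>
     (\<forall>a b. inf a b \<noteq> bot \<longrightarrow> d (sup a b) \<le> d a + d b) \<and>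
     (\<forall>\<epsilon>::real. \<epsilon> > 0 \<longrightarrow> Sup {a. d a < ennreal \<epsilon>} = top)"

definition wbelow :: "('a::complete_lattice \<Rightarrow> ennreal) \<Rightarrow> real \<Rightarrow> 'a \<Rightarrow> 'a \<Rightarrow> bool" where
  "wbelow d \<epsilon> b a \<longleftrightarrow> (\<forall>c. d c < ennreal \<epsilon> \<longrightarrow> inf c b \<noteq> bot \<longrightarrow> c \<le> a)"

definition admissible :: "('a::complete_lattice \<Rightarrow> ennreal) \<Rightarrow> bool" where
  "admissible d \<longleftrightarrow> (\<forall>a. a = Sup {b. \<exists>\<epsilon>::real. \<epsilon> > 0 \<and> wbelow d \<epsilon> b a})"

definition metric_locale :: "('a::complete_lattice \<Rightarrow> ennreal) \<Rightarrow> bool" where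
  "metric_locale d \<longleftrightarrow> frame TYPE('a) \<and> diameter d \<and> admissible d"

definition open_sublocale :: "'a::complete_lattice \<Rightarrow> 'a set" where
  "open_sublocale x = {himp x y | y. True}"

definition is_point :: "'a::complete_lattice \<Rightarrow> bool" where
  "is_point p \<longleftrightarrow> p \<noteq> top \<and> (\<forall>x y. inf x y \<le> p \<longrightarrow> x \<le> p \<or> y \<le> p)"

definition isolated_point :: "'a::complete_lattice \<Rightarrow> bool" where
  "isolated_point p \<longleftrightarrow> is_point p \<and> (\<exists>x. {top, p} = open_sublocale x)"

end

theory Submission
  imports Defs
begin

(* Call f small inside a if f \<lhd>_\<epsilon> a and d f < \<epsilon>/2 for some \<epsilon> > 0, and let M be a maximal
   pairwise disjoint family of such elements.  A nonzero c without two disjoint nonzero parts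
   satisfies c \<sqinter> y = 0 or c \<le> y for all y (by admissibility), which makes c* an isolated
   point; so every member of M splits, and joining one part of each gives a g such that every
   member of M meets both g and g*.  On the other hand, as a is dense, every element not below
   a contains a member of M.  Neither g* nor g** can contain a member of M, hence both lie
   below a. *)

lemma frame_inf_Sup:
  fixes a :: "'a::complete_lattice"
  assumes "frame TYPE('a)"
  shows "inf a (Sup S) = (SUP s\<in>S. inf a s)"
  using assms unfolding frame_def by blast

lemma frame_inf_Sup_eq_bot_iff:
  fixes a :: "'a::complete_lattice"
  assumes "frame TYPE('a)"
  shows "inf a (Sup S) = bot \<longleftrightarrow> (\<forall>s\<in>S. inf a s = bot)"
  by (simp add: frame_inf_Sup[OF assms])

lemma frame_cover_piece_not_le:
  fixes b :: "'a::complete_lattice"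
  assumes "frame TYPE('a)" and "Sup S = top" and "\<not> b \<le> a"
  shows "\<exists>e\<in>S. \<not> inf b e \<le> a"
proof -
  have "b = (SUP e\<in>S. inf b e)"
    using frame_inf_Sup[OF assms(1), of b S] assms(2) by simp
  then show ?thesis using assms(3) by (metis SUP_least)
qed

lemma le_pcomplI:
  fixes x :: "'a::complete_lattice"
  assumes "inf x a = bot"
  shows "x \<le> pcompl a"
  unfolding pcompl_def using assms by (auto intro: Sup_upper)

lemma frame_inf_pcompl:
  fixes a :: "'a::complete_lattice"
  assumes "frame TYPE('a)"
  shows "inf a (pcompl a) = bot"
  unfolding pcompl_def frame_inf_Sup[OF assms] by (auto simp: inf_commute)

lemma himp_eq_top:
  fixes c :: "'a::complete_lattice"
  assumes "c \<le> y"
  shows "himp c y = top"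
  unfolding himp_def using assms by (simp add: Sup_upper top_le le_infI2)

lemma himp_eq_pcompl:
  fixes c :: "'a::complete_lattice"
  assumes "inf c y = bot"
  shows "himp c y = pcompl c"
proof -
  have "inf z c \<le> y \<longleftrightarrow> inf z c = bot" for z
    using assms by (metis bot_unique inf.absorb_iff2 inf_commute inf_left_commute bot_least)
  then show ?thesis unfolding himp_def pcompl_def by simp
qed

lemma diameter_mono: "diameter d \<Longrightarrow> a \<le> b \<Longrightarrow> d a \<le> d b"
  unfolding diameter_def by blast

lemma diameter_sup: "diameter d \<Longrightarrow> inf a b \<noteq> bot \<Longrightarrow> d (sup a b) \<le> d a + d b"
  unfolding diameter_def by blast

lemma diameter_cover: "diameter d \<Longrightarrow> \<epsilon> > 0 \<Longrightarrow> Sup {a. d a < ennreal \<epsilon>} = top"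
  unfolding diameter_def by blast

lemma admissibleD: "admissible d \<Longrightarrow> a = Sup {b. \<exists>\<epsilon>::real. \<epsilon> > 0 \<and> wbelow d \<epsilon> b a}"
  unfolding admissible_def by blast

lemma metric_localeD:
  fixes d :: "'a::complete_lattice \<Rightarrow> ennreal"
  assumes "metric_locale d"
  shows "frame TYPE('a)" "diameter d" "admissible d"
  using assms unfolding metric_locale_def by auto

lemma neq_bot_mono:
  fixes x :: "'a::order_bot"
  shows "x \<le> y \<Longrightarrow> x \<noteq> bot \<Longrightarrow> y \<noteq> bot"
  by (auto simp: bot_unique)

lemma wbelowD: "wbelow d \<epsilon> b a \<Longrightarrow> d c < ennreal \<epsilon> \<Longrightarrow> inf c b \<noteq> bot \<Longrightarrow> c \<le> a"
  unfolding wbelow_def by blast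

lemma wbelow_antimono:
  assumes "wbelow d \<epsilon> b a" and "b' \<le> b"
  shows "wbelow d \<epsilon> b' a"
  unfolding wbelow_def
proof (intro allI impI)
  fix c assume "d c < ennreal \<epsilon>" "inf c b' \<noteq> bot"
  moreover have "inf c b' \<le> inf c b" using assms(2) by (simp add: le_infI2)
  ultimately show "c \<le> a" using assms(1) by (metis wbelowD bot_unique)
qed

lemma wbelow_le:
  fixes b :: "'a::complete_lattice"
  assumes "frame TYPE('a)" and "diameter d" and "\<epsilon> > 0" and "wbelow d \<epsilon> b a"
  shows "b \<le> a"
proof -
  have "b = (SUP e\<in>{e. d e < ennreal \<epsilon>}. inf b e)"
    using frame_inf_Sup[OF assms(1)] diameter_cover[OF assms(2,3)] by (metis inf_top.right_neutral)
  also have "\<dots> \<le> a"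
  proof (rule SUP_least)
    fix e assume "e \<in> {e. d e < ennreal \<epsilon>}"
    then show "inf b e \<le> a"
      using wbelowD[OF assms(4)] by (metis bot_least inf_commute le_infI2 mem_Collect_eq)
  qed
  finally show ?thesis .
qed

lemma exists_small_wbelow_not_le:
  fixes d :: "'a::complete_lattice \<Rightarrow> ennreal" and x a :: 'a
  assumes "metric_locale d" and "\<not> x \<le> a"
  shows "\<exists>\<delta> b. \<delta> > 0 \<and> wbelow d \<delta> b x \<and> d b < ennreal \<delta> \<and> \<not> b \<le> a"
proof -
  note ml = metric_localeD[OF assms(1)]
  have "\<not> Sup {b. \<exists>\<epsilon>::real. \<epsilon> > 0 \<and> wbelow d \<epsilon> b x} \<le> a"
    using admissibleD[OF ml(3), of x] assms(2) by simp
  then obtain b where "b \<in> {b. \<exists>\<epsilon>::real. \<epsilon> > 0 \<and> wbelow d \<epsilon> b x}" "\<not> b \<le> a"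
    by (meson Sup_least)
  then obtain \<delta> :: real where "\<delta> > 0" "wbelow d \<delta> b x" "\<not> b \<le> a"
    by blast
  moreover obtain e where "d e < ennreal \<delta>" "\<not> inf b e \<le> a"
    using frame_cover_piece_not_le[OF ml(1) diameter_cover[OF ml(2) \<open>\<delta> > 0\<close>] \<open>\<not> b \<le> a\<close>] by blast
  moreover have "d (inf b e) \<le> d e" using diameter_mono[OF ml(2)] by simp
  ultimately show ?thesis
    by (intro exI[of _ \<delta>] exI[of _ "inf b e"]) (auto intro: wbelow_antimono)
qed

lemma inf_eq_bot_or_le_if_unsplittable:
  fixes d :: "'a::complete_lattice \<Rightarrow> ennreal" and c y :: 'a
  assumes "metric_locale d"
    and unsplittable: "\<And>c1 c2. c1 \<le> c \<Longrightarrow> c2 \<le> c \<Longrightarrow> inf c1 c2 = bot \<Longrightarrow> c1 = bot \<or> c2 = bot"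
  shows "inf c y = bot \<or> c \<le> y"
proof (rule ccontr)
  note ml = metric_localeD[OF assms(1)]
  assume "\<not> (inf c y = bot \<or> c \<le> y)"
  then have "\<not> inf c y \<le> bot" and "\<not> c \<le> inf c y" by (metis bot_unique le_inf_iff)+
  then obtain \<delta> b where "\<delta> > 0" and b: "wbelow d \<delta> b (inf c y)" "\<not> b \<le> bot"
    using exists_small_wbelow_not_le[OF assms(1)] by blast
  obtain e where de: "d e < ennreal \<delta>" and ce: "\<not> inf c e \<le> inf c y"
    using frame_cover_piece_not_le[OF ml(1) diameter_cover[OF ml(2) \<open>\<delta> > 0\<close>] \<open>\<not> c \<le> inf c y\<close>]
    by blast
  have "d (inf c e) < ennreal \<delta>" using diameter_mono[OF ml(2), of "inf c e" e] de by simp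
  then have "inf (inf c e) b = bot" using wbelowD[OF b(1)] ce by blast
  moreover have "b \<le> c" using wbelow_le[OF ml(1,2) \<open>\<delta> > 0\<close> b(1)] by simp
  ultimately show False using unsplittable[of "inf c e" b] b(2) ce by auto
qed

lemma isolated_point_pcompl:
  fixes c :: "'a::complete_lattice"
  assumes fr: "frame TYPE('a)" and "c \<noteq> bot" and dich: "\<And>y. inf c y = bot \<or> c \<le> y"
  shows "isolated_point (pcompl c)"
proof -
  have disj: "inf c (pcompl c) = bot" by (rule frame_inf_pcompl[OF fr])
  have "inf x y \<le> pcompl c \<Longrightarrow> x \<le> pcompl c \<or> y \<le> pcompl c" for x y
  proof (rule ccontr)
    assume "inf x y \<le> pcompl c" and "\<not> (x \<le> pcompl c \<or> y \<le> pcompl c)"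
    then have "c \<le> x" "c \<le> y" using dich le_pcomplI by (metis inf_commute)+
    then have "c \<le> pcompl c" using \<open>inf x y \<le> pcompl c\<close> by (meson le_inf_iff order_trans)
    then show False using disj \<open>c \<noteq> bot\<close> by (simp add: inf_absorb1)
  qed
  moreover have "pcompl c \<noteq> top" using disj \<open>c \<noteq> bot\<close> by auto
  moreover have "open_sublocale c = {top, pcompl c}"
  proof -
    have "himp c y \<in> {top, pcompl c}" for y
      using dich[of y] by (auto simp: himp_eq_top himp_eq_pcompl)
    moreover have "himp c top = top" "himp c bot = pcompl c"
      by (simp_all add: himp_eq_top himp_eq_pcompl)
    ultimately show ?thesis unfolding open_sublocale_def by (auto; metis)
  qed
  ultimately show ?thesis unfolding isolated_point_def is_point_def by auto
qed

lemma exists_disjoint_parts: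
  fixes d :: "'a::complete_lattice \<Rightarrow> ennreal" and c :: 'a
  assumes "metric_locale d" and "\<forall>p::'a. \<not> isolated_point p" and "c \<noteq> bot"
  shows "\<exists>c1 c2. c1 \<le> c \<and> c2 \<le> c \<and> c1 \<noteq> bot \<and> c2 \<noteq> bot \<and> inf c1 c2 = bot"
proof (rule ccontr)
  assume "\<not> ?thesis"
  then have "inf c y = bot \<or> c \<le> y" for y
    using inf_eq_bot_or_le_if_unsplittable[OF assms(1)] by blast
  then have "isolated_point (pcompl c)"
    using isolated_point_pcompl[OF metric_localeD(1)[OF assms(1)] assms(3)] by blast
  then show False using assms(2) by blast
qed

lemma frame_exists_meets_both:
  fixes M :: "'a::complete_lattice set"
  assumes fr: "frame TYPE('a)" and disj: "pairwise (\<lambda>x y. inf x y = bot) M"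
    and parts: "\<And>c. c \<in> M \<Longrightarrow> \<exists>c1 c2. c1 \<le> c \<and> c2 \<le> c \<and> c1 \<noteq> bot \<and> c2 \<noteq> bot \<and> inf c1 c2 = bot"
  shows "\<exists>g. \<forall>c\<in>M. inf c g \<noteq> bot \<and> inf c (pcompl g) \<noteq> bot"
proof -
  obtain f1 f2 where f: "\<And>c. c \<in> M \<Longrightarrow>
      f1 c \<le> c \<and> f2 c \<le> c \<and> f1 c \<noteq> bot \<and> f2 c \<noteq> bot \<and> inf (f1 c) (f2 c) = bot"
    using parts by metis
  define g where "g = Sup (f1 ` M)"
  have "inf c g \<noteq> bot \<and> inf c (pcompl g) \<noteq> bot" if "c \<in> M" for c
  proof
    have "f1 c \<le> inf c g" using f[OF that] by (simp add: g_def SUP_upper that)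
    then show "inf c g \<noteq> bot" using f[OF that] neq_bot_mono by metis
  next
    have "inf (f2 c) (f1 c') = bot" if "c' \<in> M" for c'
    proof (cases "c' = c")
      case False
      have "inf (f2 c) (f1 c') \<le> inf c c'" using f \<open>c \<in> M\<close> that by (meson inf_mono)
      moreover have "inf c c' = bot" using disj \<open>c \<in> M\<close> that False by (simp add: pairwise_def)
      ultimately show ?thesis by (simp add: bot_unique)
    qed (use f \<open>c \<in> M\<close> in \<open>simp add: inf_commute\<close>)
    then have "f2 c \<le> inf c (pcompl g)"
      using f[OF that] by (simp add: le_pcomplI g_def frame_inf_Sup_eq_bot_iff[OF fr])
    then show "inf c (pcompl g) \<noteq> bot" using f[OF that] neq_bot_mono by metis
  qed
  then show ?thesis by blast
qed

lemma exists_maximal_disjoint_family: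
  fixes C :: "'a::complete_lattice set"
  shows "\<exists>M \<subseteq> C. pairwise (\<lambda>x y. inf x y = bot) M \<and>
           (\<forall>f\<in>C. f \<noteq> bot \<longrightarrow> (\<exists>c\<in>M. inf c f \<noteq> bot))"
proof -
  define A where "A = {M. M \<subseteq> C \<and> pairwise (\<lambda>x y. inf x y = bot) M}"
  have "\<forall>Ch\<in>chains A. \<Union>Ch \<in> A"
    unfolding A_def chains_def by (blast intro: pairwise_chain_Union)
  then obtain M where "M \<in> A" and max: "\<forall>X\<in>A. M \<subseteq> X \<longrightarrow> X = M"
    using Zorn_Lemma by blast
  have "\<exists>c\<in>M. inf c f \<noteq> bot" if "f \<in> C" "f \<noteq> bot" for f
  proof (rule ccontr)
    assume disjoint: "\<not> (\<exists>c\<in>M. inf c f \<noteq> bot)"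
    then have "insert f M \<in> A"
      using \<open>M \<in> A\<close> that by (auto simp: A_def pairwise_insert inf_commute)
    then show False using max disjoint that by (metis inf.idem insertI1 subset_insertI)
  qed
  then show ?thesis using \<open>M \<in> A\<close> unfolding A_def by blast
qed

definition small_inside :: "('a::complete_lattice \<Rightarrow> ennreal) \<Rightarrow> 'a \<Rightarrow> 'a set" where
  "small_inside d a = {f. f \<noteq> bot \<and> (\<exists>\<epsilon>::real. \<epsilon> > 0 \<and> d f < ennreal (\<epsilon>/2) \<and> wbelow d \<epsilon> f a)}"

lemma exists_small_inside_le:
  fixes d :: "'a::complete_lattice \<Rightarrow> ennreal" and a y :: 'a
  assumes "metric_locale d" and "pcompl a = bot" and "y \<noteq> bot"
  shows "\<exists>f\<in>small_inside d a. f \<le> y"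
proof -
  note ml = metric_localeD[OF assms(1)]
  have "inf y a \<noteq> bot" using le_pcomplI[of y a] assms(2,3) by (auto simp: bot_unique)
  then have "inf y (Sup {b. \<exists>\<epsilon>::real. \<epsilon> > 0 \<and> wbelow d \<epsilon> b a}) \<noteq> bot"
    using admissibleD[OF ml(3), of a] by simp
  then obtain \<epsilon> :: real and e where "\<epsilon> > 0" and e: "wbelow d \<epsilon> e a" "inf y e \<noteq> bot"
    unfolding frame_inf_Sup_eq_bot_iff[OF ml(1)] by blast
  then have "inf (inf y e) (Sup {h. d h < ennreal (\<epsilon>/2)}) \<noteq> bot"
    using diameter_cover[OF ml(2), of "\<epsilon>/2"] by simp
  then obtain h where h: "d h < ennreal (\<epsilon>/2)" and f: "inf (inf y e) h \<noteq> bot"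
    unfolding frame_inf_Sup_eq_bot_iff[OF ml(1)] by blast
  have "d (inf (inf y e) h) < ennreal (\<epsilon>/2)"
    using diameter_mono[OF ml(2), of "inf (inf y e) h" h] h by simp
  moreover have "wbelow d \<epsilon> (inf (inf y e) h) a"
    using e(1) by (rule wbelow_antimono) (simp add: le_infI1)
  ultimately have "inf (inf y e) h \<in> small_inside d a"
    unfolding small_inside_def using f \<open>\<epsilon> > 0\<close> by blast
  then show ?thesis by (metis inf_le1 le_infE)
qed

lemma exists_mem_le_if_not_le:
  fixes d :: "'a::complete_lattice \<Rightarrow> ennreal" and a x :: 'a
  assumes "metric_locale d" and "pcompl a = bot" and "M \<subseteq> small_inside d a"
    and max: "\<forall>f\<in>small_inside d a. \<exists>c\<in>M. inf c f \<noteq> bot"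
    and "\<not> x \<le> a"
  shows "\<exists>c\<in>M. c \<le> x"
proof -
  note ml = metric_localeD[OF assms(1)]
  obtain \<delta> b where "\<delta> > 0" and b: "wbelow d \<delta> b x" "d b < ennreal \<delta>" "\<not> b \<le> a"
    using exists_small_wbelow_not_le[OF assms(1,5)] by blast
  then obtain f where "f \<in> small_inside d a" "f \<le> b"
    using exists_small_inside_le[OF assms(1,2), of b] by (metis bot_least)
  then obtain c where "c \<in> M" and "inf c f \<noteq> bot" using max by blast
  moreover have "inf c f \<le> inf c b" using \<open>f \<le> b\<close> by (simp add: le_infI2)
  ultimately have cb: "inf c b \<noteq> bot" by (metis neq_bot_mono)
  obtain \<epsilon> :: real where "\<epsilon> > 0" and c: "d c < ennreal (\<epsilon>/2)" "wbelow d \<epsilon> c a" "c \<noteq> bot"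
    using \<open>c \<in> M\<close> assms(3) unfolding small_inside_def by blast
  (* Either d c < \<delta>, so b \<lhd>_\<delta> x swallows c, or d (c \<squnion> b) < \<epsilon>, so c \<lhd>_\<epsilon> a swallows
     c \<squnion> b; the latter is why small_inside asks for d f < \<epsilon>/2. *)
  show ?thesis
  proof (cases "\<delta> \<le> \<epsilon>/2")
    case True
    have "d (sup c b) \<le> d c + d b" using diameter_sup[OF ml(2) cb] .
    also have "\<dots> < ennreal (\<epsilon>/2) + ennreal \<delta>" using c(1) b(2) by (rule add_strict_mono)
    also have "\<dots> = ennreal (\<epsilon>/2 + \<delta>)" using \<open>\<epsilon> > 0\<close> \<open>\<delta> > 0\<close> by (simp add: ennreal_plus)
    also have "\<dots> \<le> ennreal \<epsilon>" using True by (intro ennreal_leI) simp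
    finally have "d (sup c b) < ennreal \<epsilon>" .
    moreover have "inf (sup c b) c \<noteq> bot" using c(3) by (simp add: inf_absorb2)
    ultimately have "sup c b \<le> a" by (rule wbelowD[OF c(2)])
    then show ?thesis using b(3) by simp
  next
    case False
    then have "d c < ennreal \<delta>"
      using c(1) by (meson ennreal_leI less_le_trans not_le order.strict_implies_order)
    then show ?thesis using wbelowD[OF b(1)] cb \<open>c \<in> M\<close> by blast
  qed
qed

lemma pcompl_le_if_meets_all:
  fixes d :: "'a::complete_lattice \<Rightarrow> ennreal" and a h :: 'a
  assumes "metric_locale d" and "pcompl a = bot" and "M \<subseteq> small_inside d a"
    and "\<forall>f\<in>small_inside d a. \<exists>c\<in>M. inf c f \<noteq> bot"
    and meets: "\<forall>c\<in>M. inf c h \<noteq> bot"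
  shows "pcompl h \<le> a"
proof (rule ccontr)
  assume "\<not> pcompl h \<le> a"
  then obtain c where "c \<in> M" "c \<le> pcompl h"
    using exists_mem_le_if_not_le[OF assms(1-4)] by blast
  then have "inf c h \<le> inf (pcompl h) h" by (simp add: le_infI1)
  then show False
    using meets \<open>c \<in> M\<close> frame_inf_pcompl[OF metric_localeD(1)[OF assms(1)], of h]
    by (simp add: inf_commute bot_unique)
qed

theorem corollary5p5:
  fixes d :: "'a::complete_lattice \<Rightarrow> ennreal" and a :: 'a
  assumes "metric_locale d"
    and "\<forall>p::'a. \<not> isolated_point p"
    and "pcompl a = bot"
  shows "\<exists>g::'a. sup (pcompl g) (pcompl (pcompl g)) \<le> a"
proof -
  obtain M where M: "M \<subseteq> small_inside d a" "pairwise (\<lambda>x y. inf x y = bot) M"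
    and max: "\<forall>f\<in>small_inside d a. \<exists>c\<in>M. inf c f \<noteq> bot"
    using exists_maximal_disjoint_family[of "small_inside d a"]
    by (auto simp: small_inside_def)
  have "\<exists>c1 c2. c1 \<le> c \<and> c2 \<le> c \<and> c1 \<noteq> bot \<and> c2 \<noteq> bot \<and> inf c1 c2 = bot" if "c \<in> M" for c
    using exists_disjoint_parts[OF assms(1,2)] that M(1) by (auto simp: small_inside_def)
  then obtain g where "\<forall>c\<in>M. inf c g \<noteq> bot \<and> inf c (pcompl g) \<noteq> bot"
    using frame_exists_meets_both[OF metric_localeD(1)[OF assms(1)] M(2)] by blast
  then have "pcompl g \<le> a" and "pcompl (pcompl g) \<le> a"
    using pcompl_le_if_meets_all[OF assms(1,3) M(1) max] by blast+
  then show ?thesis by (intro exI[of _ g] sup_least)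
qed

end
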